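(* Let $N\in\mathbb{N}$, $a\ge 0$, $b>0$, and put $\alpha:=a+b-1$, $\beta:=b-1$. For $\kappa>0$ let $X_\kappa$ be an $\mathbb{R}^N$-valued random variable whose distribution $\mu_\kappa$ is the probability measure on the alcove $A:=\{x\in\mathbb{R}^N:\ -1\le x_1\le\dots\le x_N\le 1\}$ with Lebesgue density $$c_\kappa\prod_{1\le i<j\le N}(x_j-x_i)^{\kappa}\prod_{i=1}^N(1-x_i)^{\frac{\kappa(a+b)}{2}-\frac12}(1+x_i)^{\frac{\kappa b}{2}-\frac12},$$ where $c_\kappa>0$ is the normalizing constant. Let $z=(z_1,\dots,z_N)$ be the vector of the ordered zeros $z_1\le\dots\le z_N$ of the Jacobi polynomial $P_N^{(\alpha,\beta)}$; it lies in the interior of $A$. Then $X_\kappa\to z$ in probability as $\kappa\to\infty$.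
   Context: For $\alpha,\beta>-1$, $(P_n^{(\alpha,\beta)})_{n\ge0}$ denote the classical Jacobi polynomials, i.e. the orthogonal polynomials on $]-1,1[$ with respect to the weight $(1-x)^\alpha(1+x)^\beta$; $P_N^{(\alpha,\beta)}$ has degree $N$ and $N$ simple zeros in $]-1,1[$. *)

theory Defs
  imports "HOL-Probability.Probability" "HOL-Computational_Algebra.Polynomial"
begin

text \<open>Classical Jacobi polynomial (Szego normalisation):
  P_n^(al,be)(x) = sum_{s=0}^n binom(n+al, n-s) binom(n+be, s) ((x-1)/2)^s ((x+1)/2)^(n-s).\<close>
definition jacobi_poly :: "nat \<Rightarrow> real \<Rightarrow> real \<Rightarrow> real poly" where
  "jacobi_poly n al be =
     (\<Sum>s\<le>n. smult (((real n + al) gchoose (n - s)) * ((real n + be) gchoose s))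
                 ([:-1/2, 1/2:] ^ s * [:1/2, 1/2:] ^ (n - s)))"

text \<open>Lebesgue measure on R^N, points represented as functions on {..<N}.\<close>
abbreviation lborelN :: "nat \<Rightarrow> (nat \<Rightarrow> real) measure" where
  "lborelN N \<equiv> PiM {..<N} (\<lambda>_. lborel)"

definition alcove :: "nat \<Rightarrow> (nat \<Rightarrow> real) set" where
  "alcove N = {x. (\<forall>i<N. -1 \<le> x i \<and> x i \<le> 1) \<and> (\<forall>i j. i \<le> j \<and> j < N \<longrightarrow> x i \<le> x j)}"

definition jacobi_dens :: "nat \<Rightarrow> real \<Rightarrow> real \<Rightarrow> real \<Rightarrow> (nat \<Rightarrow> real) \<Rightarrow> real" where
  "jacobi_dens N a b \<kappa> x =
     indicator (alcove N) x *
     (\<Prod>j<N. \<Prod>i<j. (x j - x i) powr \<kappa>) *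
     (\<Prod>i<N. (1 - x i) powr (\<kappa> * (a + b) / 2 - 1/2) * (1 + x i) powr (\<kappa> * b / 2 - 1/2))"

definition jacobi_norm :: "nat \<Rightarrow> real \<Rightarrow> real \<Rightarrow> real \<Rightarrow> real" where
  "jacobi_norm N a b \<kappa> = enn2real (\<integral>\<^sup>+ x. ennreal (jacobi_dens N a b \<kappa> x) \<partial>lborelN N)"

definition jacobi_ensemble :: "nat \<Rightarrow> real \<Rightarrow> real \<Rightarrow> real \<Rightarrow> (nat \<Rightarrow> real) measure" where
  "jacobi_ensemble N a b \<kappa> =
     density (lborelN N) (\<lambda>x. ennreal (jacobi_dens N a b \<kappa> x / jacobi_norm N a b \<kappa>))"

end

theory Submission
  imports Defs "HOL-Real_Asymp.Real_Asymp"
begin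

text \<open>
  The Jacobi polynomial solves Jacobi's differential equation; evaluated at its simple zeros
  this gives Stieltjes' relations
    \<open>\<Sum>j\<noteq>k. 1 / (z\<^sub>k - z\<^sub>j) = p / (1 - z\<^sub>k) - q / (1 + z\<^sub>k)\<close>,  with \<open>p = (a + b) / 2\<close>, \<open>q = b / 2\<close>,
  i.e. \<open>z\<close> is a critical point of the concave logarithmic weight
    \<open>W x = (\<Sum>i<j. ln (x\<^sub>j - x\<^sub>i)) + (\<Sum>i. p ln (1 - x\<^sub>i) + q ln (1 + x\<^sub>i))\<close>.
  Writing \<open>W x - W z\<close> as a sum of logarithms of ratios and bounding each by \<open>ln u \<le> u - 1\<close>,
  sharpened by a quadratic term for the ratios \<open>(1 - x\<^sub>i) / (1 - z\<^sub>i)\<close>, the first-order terms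
  cancel by Stieltjes' relations and \<open>W x \<le> W z - p/16 |x - z|\<^sup>2\<close>.

  On the open alcove the density of \<open>\<mu>\<^sub>\<kappa>\<close> is \<open>exp ((\<kappa> - 1) W)\<close> times that of \<open>\<mu>\<^sub>1\<close>. With
  \<open>D = p \<epsilon>\<^sup>2 / 16\<close>, the unnormalised mass of \<open>{|x - z| \<ge> \<epsilon>}\<close> is at most
  \<open>exp ((\<kappa> - 1) (W z - D))\<close> times a constant, while the normalising constant is at least
  \<open>exp ((\<kappa> - 1) (W z - D/2))\<close> times the \<open>\<mu>\<^sub>1\<close>-mass of a small cube around \<open>z\<close>, on which
  \<open>W \<ge> W z - D/2\<close> by continuity. The ratio decays like \<open>exp (- (\<kappa> - 1) D / 2)\<close>.
\<close>

section \<open>Jacobi's differential equation\<close>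

definition jacobi_operator :: "nat \<Rightarrow> real \<Rightarrow> real \<Rightarrow> real poly \<Rightarrow> real poly" where
  "jacobi_operator n al be P =
     [:1, 0, -1:] * pderiv (pderiv P) + [:be - al, -(al + be + 2):] * pderiv P
     + smult (real n * (real n + al + be + 1)) P"

lemma poly_jacobi_operator:
  "poly (jacobi_operator n al be P) x =
     (1 - x\<^sup>2) * poly (pderiv (pderiv P)) x + (be - al - (al + be + 2) * x) * poly (pderiv P) x
     + real n * (real n + al + be + 1) * poly P x"
  unfolding jacobi_operator_def by (simp add: algebra_simps power2_eq_square)

lemma pderiv_sum: "pderiv (\<Sum>a\<in>A. f a) = (\<Sum>a\<in>A. pderiv (f a))"
  by (induct A rule: infinite_finite_induct) (auto simp: pderiv_add)

lemma poly_jacobi_operator_sum: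
  "poly (jacobi_operator n al be (\<Sum>s\<in>A. smult (c s) (p s))) x =
     (\<Sum>s\<in>A. c s * poly (jacobi_operator n al be (p s)) x)"
  unfolding poly_jacobi_operator
  by (simp add: pderiv_sum pderiv_smult poly_sum sum_distrib_left flip: sum.distrib)
    (simp add: algebra_simps)

lemma pderiv_linear_powers:
  "pderiv ([:a, c:] ^ s * [:b, d:] ^ t) =
     smult (real s * c) ([:a, c:] ^ (s - 1) * [:b, d:] ^ t) + smult (real t * d) ([:a, c:] ^ s * [:b, d:] ^ (t - 1))"
  by (simp add: pderiv_mult pderiv_power pderiv_pCons algebra_simps)

lemma of_nat_mult_power_pred:
  fixes u :: real
  assumes "u \<noteq> 0"
  shows "real s * u ^ (s - 1) = real s * u ^ s / u"
    and "real s * real (s - 1) * u ^ (s - 1 - 1) = real s * (real s - 1) * u ^ s / u\<^sup>2"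
proof -
  show "real s * u ^ (s - 1) = real s * u ^ s / u"
    using assms by (cases s) auto
  show "real s * real (s - 1) * u ^ (s - 1 - 1) = real s * (real s - 1) * u ^ s / u\<^sup>2"
    using assms by (cases s; cases "s - 1") (auto simp: power2_eq_square)
qed

lemma poly_pderiv_linear_powers:
  fixes x :: real
  assumes "x \<noteq> 1" "x \<noteq> -1"
  defines "u \<equiv> (x - 1) / 2" and "v \<equiv> (x + 1) / 2"
  shows "poly (pderiv ([:-1/2, 1/2:] ^ s * [:1/2, 1/2:] ^ t)) x =
      u ^ s * v ^ t * (real s / (2 * u) + real t / (2 * v))"
    and "poly (pderiv (pderiv ([:-1/2, 1/2:] ^ s * [:1/2, 1/2:] ^ t))) x =
      u ^ s * v ^ t * (real s * (real s - 1) / (4 * u\<^sup>2) + real s * real t / (2 * u * v)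
        + real t * (real t - 1) / (4 * v\<^sup>2))"
proof -
  have u: "u \<noteq> 0" and v: "v \<noteq> 0"
    using assms by (auto simp: u_def v_def)
  have pu: "poly [:-1/2, 1/2:] x = u" and pv: "poly [:1/2, 1/2:] x = v"
    by (simp_all add: u_def v_def)
  note poly_simps = poly_add poly_smult poly_mult poly_power pu pv
  have "poly (pderiv ([:-1/2, 1/2:] ^ s * [:1/2, 1/2:] ^ t)) x =
      (real s * u ^ (s - 1)) * v ^ t / 2 + (real t * v ^ (t - 1)) * u ^ s / 2"
    by (simp only: pderiv_linear_powers poly_simps) (simp add: algebra_simps)
  also have "\<dots> = u ^ s * v ^ t * (real s / (2 * u) + real t / (2 * v))"
    unfolding of_nat_mult_power_pred[OF u] of_nat_mult_power_pred[OF v]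
    using u v by (simp add: field_simps)
  finally show "poly (pderiv ([:-1/2, 1/2:] ^ s * [:1/2, 1/2:] ^ t)) x =
      u ^ s * v ^ t * (real s / (2 * u) + real t / (2 * v))" .
  have "poly (pderiv (pderiv ([:-1/2, 1/2:] ^ s * [:1/2, 1/2:] ^ t))) x =
      (real s * real (s - 1) * u ^ (s - 1 - 1)) * v ^ t / 4
      + (real s * u ^ (s - 1)) * (real t * v ^ (t - 1)) / 2
      + (real t * real (t - 1) * v ^ (t - 1 - 1)) * u ^ s / 4"
    by (simp only: pderiv_linear_powers pderiv_add pderiv_smult poly_simps) (simp add: algebra_simps)
  also have "\<dots> = u ^ s * v ^ t * (real s * (real s - 1) / (4 * u\<^sup>2) + real s * real t / (2 * u * v)
      + real t * (real t - 1) / (4 * v\<^sup>2))"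
    unfolding of_nat_mult_power_pred[OF u] of_nat_mult_power_pred[OF v]
    using u v by (simp add: field_simps power2_eq_square)
  finally show "poly (pderiv (pderiv ([:-1/2, 1/2:] ^ s * [:1/2, 1/2:] ^ t))) x =
      u ^ s * v ^ t * (real s * (real s - 1) / (4 * u\<^sup>2) + real s * real t / (2 * u * v)
        + real t * (real t - 1) / (4 * v\<^sup>2))" .
qed

lemma poly_jacobi_operator_basis:
  fixes x :: real
  assumes "x \<noteq> 1" "x \<noteq> -1"
  defines "u \<equiv> (x - 1) / 2" and "v \<equiv> (x + 1) / 2"
  shows "poly (jacobi_operator (s + t) al be ([:-1/2, 1/2:] ^ s * [:1/2, 1/2:] ^ t)) x =
     u ^ s * v ^ t * (real t * (real t + be) / v - real s * (real s + al) / u)"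
proof -
  have u: "u \<noteq> 0" and v: "v \<noteq> 0" and vu: "v = u + 1" and xuv: "x = u + v"
    using assms by (auto simp: u_def v_def field_simps)
  have "poly [:-1/2, 1/2:] x = u" "poly [:1/2, 1/2:] x = v"
    by (simp_all add: u_def v_def)
  then have basis: "poly ([:-1/2, 1/2:] ^ s * [:1/2, 1/2:] ^ t) x = u ^ s * v ^ t"
    by (simp only: poly_mult poly_power)
  have factor: "A * (K * X) + B * (K * Y) + C * K = K * (A * X + B * Y + C)" for A B C K X Y :: real
    by (simp add: algebra_simps)
  have ident: "(1 - x\<^sup>2) * (real s * (real s - 1) / (4 * u\<^sup>2) + real s * real t / (2 * u * v)
        + real t * (real t - 1) / (4 * v\<^sup>2))
      + (be - al - (al + be + 2) * x) * (real s / (2 * u) + real t / (2 * v))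
      + real (s + t) * (real (s + t) + al + be + 1)
      = real t * (real t + be) / v - real s * (real s + al) / u"
    using u v unfolding xuv by (simp add: field_simps power2_eq_square) (simp add: vu algebra_simps)
  show ?thesis
    by (simp only: poly_jacobi_operator poly_pderiv_linear_powers[OF assms(1,2), folded u_def v_def]
        basis factor ident)
qed

definition jacobi_coeff :: "nat \<Rightarrow> real \<Rightarrow> real \<Rightarrow> nat \<Rightarrow> real" where
  "jacobi_coeff n al be s = ((real n + al) gchoose (n - s)) * ((real n + be) gchoose s)"

lemma jacobi_poly_eq_sum:
  "jacobi_poly n al be =
     (\<Sum>s\<le>n. smult (jacobi_coeff n al be s) ([:-1/2, 1/2:] ^ s * [:1/2, 1/2:] ^ (n - s)))"
  by (simp add: jacobi_poly_def jacobi_coeff_def)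

lemma gbinomial_Suc_absorb: "of_nat (Suc k) * (a gchoose Suc k) = (a - of_nat k) * (a gchoose k)"
  by (rule trans[OF gbinomial_absorption gbinomial_absorb_comp[symmetric]])

lemma jacobi_coeff_Suc:
  assumes "s < n"
  shows "jacobi_coeff n al be (Suc s) * (real (Suc s) * (real (Suc s) + al)) =
    jacobi_coeff n al be s * (real (n - s) * (real (n - s) + be))"
proof -
  obtain m where m: "n - s = Suc m" and m': "n - Suc s = m"
    using assms by (metis Suc_diff_Suc)
  have al: "real n + al - real m = real (Suc s) + al" and be: "real n + be - real s = real (n - s) + be"
    using m assms by (simp_all add: of_nat_diff)
  have "jacobi_coeff n al be (Suc s) * (real (Suc s) * (real (Suc s) + al)) =
      ((real n + al - real m) * ((real n + al) gchoose m)) * (real (Suc s) * ((real n + be) gchoose Suc s))"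
    unfolding jacobi_coeff_def m' al by (simp only: mult_ac)
  also have "\<dots> = (real (Suc m) * ((real n + al) gchoose Suc m)) * ((real n + be - real s) * ((real n + be) gchoose s))"
    by (simp only: gbinomial_Suc_absorb)
  also have "\<dots> = jacobi_coeff n al be s * (real (n - s) * (real (n - s) + be))"
    unfolding jacobi_coeff_def m[symmetric] be by (simp only: mult_ac)
  finally show ?thesis .
qed

lemma poly_jacobi_operator_jacobi_poly_off_endpoints:
  fixes x :: real
  assumes "x \<noteq> 1" "x \<noteq> -1"
  shows "poly (jacobi_operator n al be (jacobi_poly n al be)) x = 0"
proof -
  define u where "u = (x - 1) / 2"
  define v where "v = (x + 1) / 2"
  have u: "u \<noteq> 0" and v: "v \<noteq> 0"
    using assms by (auto simp: u_def v_def)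
  define A where "A s = jacobi_coeff n al be s * (real s * (real s + al)) * u ^ s * v ^ (n - s) / u" for s
  define T where "T s = jacobi_coeff n al be s * (real (n - s) * (real (n - s) + be)) * u ^ s * v ^ (n - s) / v"
    for s
  \<comment> \<open>The basis formula splits each term into \<open>T s - A s\<close>; the coefficient recurrence gives
    \<open>A (Suc s) = T s\<close>, so the sum telescopes.\<close>
  have A_Suc: "A (Suc s) = T s" if "s < n" for s
  proof -
    have "n - s = Suc (n - Suc s)"
      using that by simp
    then show ?thesis
      unfolding A_def T_def jacobi_coeff_Suc[OF that, symmetric] using u v by simp
  qed
  have "poly (jacobi_operator n al be (jacobi_poly n al be)) x = (\<Sum>s\<le>n. T s - A s)"
    unfolding jacobi_poly_eq_sum poly_jacobi_operator_sum
  proof (rule sum.cong[OF refl])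
    fix s assume "s \<in> {..n}"
    then have "n = s + (n - s)"
      by simp
    then have "jacobi_coeff n al be s * poly (jacobi_operator n al be ([:-1/2, 1/2:] ^ s * [:1/2, 1/2:] ^ (n - s))) x =
        jacobi_coeff n al be s * (u ^ s * v ^ (n - s) *
          (real (n - s) * (real (n - s) + be) / v - real s * (real s + al) / u))" (is "?lhs = _")
      using poly_jacobi_operator_basis[OF assms, of s "n - s" al be] by (simp add: u_def v_def)
    also have "\<dots> = T s - A s"
      using u v by (simp add: A_def T_def field_simps)
    finally show "?lhs = T s - A s" .
  qed
  also have "\<dots> = (\<Sum>s<n. A (Suc s) - A s) + (T n - A n)"
    by (simp add: lessThan_Suc_atMost[symmetric] A_Suc)
  also have "\<dots> = 0"
    by (simp only: sum_lessThan_telescope) (simp add: A_def T_def)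
  finally show ?thesis .
qed

theorem jacobi_poly_ode: "jacobi_operator n al be (jacobi_poly n al be) = 0"
proof (rule ccontr)
  assume "jacobi_operator n al be (jacobi_poly n al be) \<noteq> 0"
  then have "finite {x. poly (jacobi_operator n al be (jacobi_poly n al be)) x = 0}"
    by (rule poly_roots_finite)
  moreover have "UNIV - {1, -1} \<subseteq> {x. poly (jacobi_operator n al be (jacobi_poly n al be)) x = 0}"
    using poly_jacobi_operator_jacobi_poly_off_endpoints by auto
  ultimately show False
    using Diff_infinite_finite[OF _ infinite_UNIV_char_0, of "{1, -1 :: real}"] finite_subset by blast
qed

section \<open>Stieltjes relations for the zeros\<close>

lemma degree_jacobi_poly_le: "degree (jacobi_poly n al be) \<le> n"
  unfolding jacobi_poly_def
proof (intro degree_sum_le order.trans[OF degree_smult_le] order.trans[OF degree_mult_le])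
  fix s assume "s \<in> {..n}"
  then show "degree ([:-1/2, 1/2:] ^ s :: real poly) + degree ([:1/2, 1/2:] ^ (n - s) :: real poly) \<le> n"
    using degree_power_le[of "[:-1/2, 1/2:] :: real poly" s] degree_power_le[of "[:1/2, 1/2:] :: real poly" "n - s"]
    by simp
qed simp

lemma prod_root_factors_dvd:
  fixes p :: "'a :: idom poly"
  assumes "finite S" "\<And>s. s \<in> S \<Longrightarrow> poly p s = 0"
  shows "(\<Prod>s\<in>S. [:-s, 1:]) dvd p"
  using assms
proof (induction S rule: finite_induct)
  case (insert a S)
  then obtain r where r: "p = (\<Prod>s\<in>S. [:-s, 1:]) * r"
    by (auto elim: dvdE)
  have "poly (\<Prod>s\<in>S. [:-s, 1:]) a \<noteq> 0"
    using insert.hyps by (auto simp: poly_prod)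
  then have "poly r a = 0"
    using insert.prems[of a] r by simp
  then obtain r' where "r = [:-a, 1:] * r'"
    by (auto simp: poly_eq_0_iff_dvd elim: dvdE)
  then have "p = ([:-a, 1:] * (\<Prod>s\<in>S. [:-s, 1:])) * r'"
    using r by (simp only: mult_ac)
  then show ?case
    unfolding prod.insert[OF insert.hyps] by (rule dvdI)
qed simp

lemma poly_eq_smult_prod_roots:
  fixes P :: "'a :: field_char_0 poly" and z :: "nat \<Rightarrow> 'a"
  assumes inj: "inj_on z {..<N}" and roots: "{x. poly P x = 0} = z ` {..<N}" and deg: "degree P \<le> N"
  obtains c where "c \<noteq> 0" "P = smult c (\<Prod>i<N. [:-z i, 1:])"
proof -
  have "P \<noteq> 0"
  proof
    assume "P = 0"
    then have "UNIV = z ` {..<N}"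
      using roots by auto
    then show False
      using infinite_UNIV_char_0[where 'a = 'a] by (metis finite_imageI finite_lessThan)
  qed
  have "(\<Prod>i<N. [:-z i, 1:]) = (\<Prod>s\<in>z ` {..<N}. [:-s, 1:])"
    using prod.reindex[OF inj, of "\<lambda>s. [:-s, 1:]"] by simp
  also have "\<dots> dvd P"
    using roots by (intro prod_root_factors_dvd) auto
  finally obtain r where r: "P = (\<Prod>i<N. [:-z i, 1:]) * r"
    by (auto elim: dvdE)
  have "degree (\<Prod>i<N. [:-z i, 1:]) = N"
    by (subst degree_prod_eq_sum_degree) auto
  then have "degree r = 0"
    using deg r \<open>P \<noteq> 0\<close> by (auto simp: degree_mult_eq)
  then obtain c where "r = [:c:]"
    by (rule degree_eq_zeroE)
  then show ?thesis
    using that r \<open>P \<noteq> 0\<close> by (auto simp: mult.commute)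
qed

lemma poly_pderiv_prod_roots_at_root:
  fixes z :: "nat \<Rightarrow> 'a :: field"
  assumes inj: "inj_on z {..<N}" and k: "k < N"
  defines "R \<equiv> \<Prod>i\<in>{..<N} - {k}. z k - z i"
  shows "poly (pderiv (\<Prod>i<N. [:-z i, 1:])) (z k) = R"
    and "poly (pderiv (pderiv (\<Prod>i<N. [:-z i, 1:]))) (z k) = 2 * R * (\<Sum>j\<in>{..<N} - {k}. 1 / (z k - z j))"
proof -
  define A where "A = {..<N} - {k}"
  define Q where "Q = (\<Prod>i\<in>A. [:-z i, 1:])"
  have ne: "z k - z i \<noteq> 0" if "i \<in> A" for i
    using that inj k unfolding A_def by (auto dest: inj_onD)
  define X where "X = [:-z k, 1:]"
  have split: "(\<Prod>i<N. [:-z i, 1:]) = X * Q"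
    unfolding X_def Q_def A_def using k by (simp add: prod.remove)
  have X: "pderiv X = 1" "poly X (z k) = 0"
    by (simp_all add: X_def pderiv_pCons)
  have "poly (pderiv Q) (z k) = (\<Sum>a\<in>A. \<Prod>i\<in>A - {a}. z k - z i)"
    unfolding Q_def pderiv_prod by (simp add: poly_sum poly_prod pderiv_pCons)
  also have "\<dots> = (\<Sum>a\<in>A. R / (z k - z a))"
  proof (rule sum.cong[OF refl])
    fix a assume a: "a \<in> A"
    then have "R = (z k - z a) * (\<Prod>i\<in>A - {a}. z k - z i)"
      unfolding R_def A_def[symmetric] by (simp add: prod.remove A_def)
    then show "(\<Prod>i\<in>A - {a}. z k - z i) = R / (z k - z a)"
      using ne[OF a] by simp
  qed
  finally have "poly (pderiv Q) (z k) = R * (\<Sum>j\<in>A. 1 / (z k - z j))"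
    by (simp add: sum_distrib_left)
  moreover have "poly Q (z k) = R"
    unfolding Q_def R_def A_def by (simp add: poly_prod)
  ultimately show "poly (pderiv (\<Prod>i<N. [:-z i, 1:])) (z k) = R"
    and "poly (pderiv (pderiv (\<Prod>i<N. [:-z i, 1:]))) (z k) = 2 * R * (\<Sum>j\<in>{..<N} - {k}. 1 / (z k - z j))"
    unfolding split A_def by (simp_all add: pderiv_mult pderiv_add X)
qed

lemma jacobi_poly_zeros_relation:
  fixes z :: "nat \<Rightarrow> real"
  assumes inj: "inj_on z {..<N}"
    and roots: "{x. poly (jacobi_poly N al be) x = 0} = z ` {..<N}"
    and k: "k < N"
  shows "(1 - (z k)\<^sup>2) * (2 * (\<Sum>j\<in>{..<N} - {k}. 1 / (z k - z j))) = (al + be + 2) * z k + al - be"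
proof -
  obtain c where c: "c \<noteq> 0" and P: "jacobi_poly N al be = smult c (\<Prod>i<N. [:-z i, 1:])"
    using poly_eq_smult_prod_roots[OF inj roots degree_jacobi_poly_le] by blast
  define R where "R = (\<Prod>i\<in>{..<N} - {k}. z k - z i)"
  define S where "S = (\<Sum>j\<in>{..<N} - {k}. 1 / (z k - z j))"
  have "R \<noteq> 0"
    using inj k unfolding R_def by (auto dest: inj_onD)
  have "poly (jacobi_poly N al be) (z k) = 0"
    using roots k by auto
  then have "0 = poly (jacobi_operator N al be (jacobi_poly N al be)) (z k)"
    by (simp add: jacobi_poly_ode)
  also have "\<dots> = (c * R) * ((1 - (z k)\<^sup>2) * (2 * S) + (be - al - (al + be + 2) * z k))"
    unfolding poly_jacobi_operator \<open>poly (jacobi_poly N al be) (z k) = 0\<close>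
    unfolding P pderiv_smult poly_smult poly_pderiv_prod_roots_at_root[OF inj k]
      R_def[symmetric] S_def[symmetric]
    by (simp add: algebra_simps)
  finally show ?thesis
    using c \<open>R \<noteq> 0\<close> unfolding S_def by simp
qed

definition open_alcove :: "nat \<Rightarrow> (nat \<Rightarrow> real) set" where
  "open_alcove N = {x. (\<forall>i<N. -1 < x i \<and> x i < 1) \<and> (\<forall>j<N. \<forall>i<j. x i < x j)}"

text \<open>These say that \<open>z\<close> is a critical point of \<open>jacobi_log_weight N p q\<close> defined below.\<close>

definition stieltjes_relations :: "nat \<Rightarrow> real \<Rightarrow> real \<Rightarrow> (nat \<Rightarrow> real) \<Rightarrow> bool" where
  "stieltjes_relations N p q z \<longleftrightarrow>
     (\<forall>k<N. (\<Sum>j\<in>{..<N} - {k}. 1 / (z k - z j)) = p / (1 - z k) - q / (1 + z k))"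

lemma inj_on_lessThan_if_increasing:
  fixes z :: "nat \<Rightarrow> 'a :: linorder"
  assumes "\<And>i j. i < j \<Longrightarrow> j < N \<Longrightarrow> z i < z j"
  shows "inj_on z {..<N}"
  by (rule inj_onI) (metis assms lessThan_iff linorder_neqE_nat order_less_irrefl)

lemma jacobi_poly_zeros_less_one:
  fixes z :: "nat \<Rightarrow> real"
  assumes al: "al > -1" and be: "be > -1"
    and mono: "\<And>i j. i < j \<Longrightarrow> j < N \<Longrightarrow> z i < z j"
    and roots: "{x. poly (jacobi_poly N al be) x = 0} = z ` {..<N}"
    and k: "k < N"
  shows "z k < 1"
proof -
  define m where "m = N - 1"
  have m: "m < N" "k = m \<or> k < m"
    using k by (auto simp: m_def)
  \<comment> \<open>At the largest zero all terms of the sum are positive, so \<open>z m \<ge> 1\<close> would give the two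
    sides of the relation opposite signs.\<close>
  have "z m < 1"
  proof (rule ccontr)
    assume "\<not> z m < 1"
    then have "1 \<le> z m"
      by simp
    then have "al + be + 2 \<le> (al + be + 2) * z m"
      using al be by (simp add: mult_le_cancel_left1)
    moreover have "(1 - (z m)\<^sup>2) * (2 * (\<Sum>j\<in>{..<N} - {m}. 1 / (z m - z j))) \<le> 0"
    proof (rule mult_nonpos_nonneg)
      show "1 - (z m)\<^sup>2 \<le> 0"
        using \<open>1 \<le> z m\<close> by (simp add: one_le_power)
      have "0 \<le> 1 / (z m - z j)" if "j \<in> {..<N} - {m}" for j
      proof -
        have "j < m"
          using that by (auto simp: m_def)
        then show ?thesis
          using mono[of j m] m(1) by simp
      qed
      then have "0 \<le> (\<Sum>j\<in>{..<N} - {m}. 1 / (z m - z j))"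
        by (rule sum_nonneg)
      then show "0 \<le> 2 * (\<Sum>j\<in>{..<N} - {m}. 1 / (z m - z j))"
        by simp
    qed
    ultimately show False
      using jacobi_poly_zeros_relation[OF inj_on_lessThan_if_increasing[OF mono] roots m(1)] al
      by linarith
  qed
  then show ?thesis
    using m mono[of k m] by auto
qed

lemma jacobi_poly_zeros_greater_minus_one:
  fixes z :: "nat \<Rightarrow> real"
  assumes al: "al > -1" and be: "be > -1"
    and mono: "\<And>i j. i < j \<Longrightarrow> j < N \<Longrightarrow> z i < z j"
    and roots: "{x. poly (jacobi_poly N al be) x = 0} = z ` {..<N}"
    and k: "k < N"
  shows "-1 < z k"
proof -
  have "-1 < z 0"
  proof (rule ccontr)
    assume "\<not> -1 < z 0"
    then have "z 0 \<le> -1"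
      by simp
    then have "(al + be + 2) * z 0 \<le> - (al + be + 2)"
      using al be mult_left_mono[of "z 0" "-1" "al + be + 2"] by simp
    moreover have "0 \<le> (1 - (z 0)\<^sup>2) * (2 * (\<Sum>j\<in>{..<N} - {0}. 1 / (z 0 - z j)))"
    proof (rule mult_nonpos_nonpos)
      show "1 - (z 0)\<^sup>2 \<le> 0"
        using \<open>z 0 \<le> -1\<close> abs_le_square_iff[of 1 "z 0"] by simp
      have "1 / (z 0 - z j) \<le> 0" if "j \<in> {..<N} - {0}" for j
        using that mono[of 0 j] by simp
      then have "(\<Sum>j\<in>{..<N} - {0}. 1 / (z 0 - z j)) \<le> 0"
        by (rule sum_nonpos)
      then show "2 * (\<Sum>j\<in>{..<N} - {0}. 1 / (z 0 - z j)) \<le> 0"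
        by simp
    qed
    ultimately show False
      using jacobi_poly_zeros_relation[OF inj_on_lessThan_if_increasing[OF mono] roots, of 0] k be
      by linarith
  qed
  then show ?thesis
    using mono[of 0 k] k by (cases k) auto
qed

lemma jacobi_poly_zeros_stieltjes:
  fixes z :: "nat \<Rightarrow> real"
  assumes al: "al > -1" and be: "be > -1"
    and mono: "\<And>i j. i < j \<Longrightarrow> j < N \<Longrightarrow> z i < z j"
    and roots: "{x. poly (jacobi_poly N al be) x = 0} = z ` {..<N}"
  shows "z \<in> open_alcove N"
    and "stieltjes_relations N ((al + 1) / 2) ((be + 1) / 2) z"
proof -
  have less_one: "z k < 1" and greater_minus_one: "-1 < z k" if "k < N" for k
    using jacobi_poly_zeros_less_one[OF al be _ roots that] jacobi_poly_zeros_greater_minus_one[OF al be _ roots that]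
      mono by blast+
  show "z \<in> open_alcove N"
    unfolding open_alcove_def using less_one greater_minus_one mono by auto
  have "(\<Sum>j\<in>{..<N} - {k}. 1 / (z k - z j)) = ((al + 1) / 2) / (1 - z k) - ((be + 1) / 2) / (1 + z k)"
    if k: "k < N" for k
  proof -
    have "1 - z k \<noteq> 0" "1 + z k \<noteq> 0"
      using less_one[OF k] greater_minus_one[OF k] by auto
    moreover have "(1 - z k) * (1 + z k) * (2 * (\<Sum>j\<in>{..<N} - {k}. 1 / (z k - z j))) =
        (al + 1) * (1 + z k) - (be + 1) * (1 - z k)"
      using jacobi_poly_zeros_relation[OF inj_on_lessThan_if_increasing[OF mono] roots k]
      by (simp add: power2_eq_square algebra_simps)
    ultimately show ?thesis
      by (simp add: divide_simps) (simp add: algebra_simps)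
  qed
  then show "stieltjes_relations N ((al + 1) / 2) ((be + 1) / 2) z"
    by (simp add: stieltjes_relations_def)
qed

section \<open>A quadratic bound for the logarithmic weight\<close>

definition jacobi_log_weight :: "nat \<Rightarrow> real \<Rightarrow> real \<Rightarrow> (nat \<Rightarrow> real) \<Rightarrow> real" where
  "jacobi_log_weight N p q x =
     (\<Sum>j<N. \<Sum>i<j. ln (x j - x i)) + (\<Sum>i<N. p * ln (1 - x i) + q * ln (1 + x i))"

lemma ln_le_minus_one_quadratic:
  fixes u :: real
  assumes "0 < u"
  shows "ln u \<le> (u - 1) - (u - 1)\<^sup>2 / (2 * (u + 1))"
proof -
  define w where "w = sqrt u"
  have w: "0 < w" "w\<^sup>2 = u"
    using assms by (auto simp: w_def)
  have "ln u = 2 * ln w"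
    using assms by (simp add: w_def ln_sqrt)
  also have "\<dots> \<le> 2 * (w - 1)"
    using ln_le_minus_one[OF w(1)] by simp
  also have "\<dots> \<le> (u - 1) - (u - 1)\<^sup>2 / (2 * (u + 1))"
  proof -
    have "(w\<^sup>2 - 1)\<^sup>2 = (w - 1)\<^sup>2 * (w + 1)\<^sup>2"
      by (simp add: power2_eq_square algebra_simps)
    also have "\<dots> \<le> (w - 1)\<^sup>2 * (2 * (w\<^sup>2 + 1))"
    proof (rule mult_left_mono)
      show "(w + 1)\<^sup>2 \<le> 2 * (w\<^sup>2 + 1)"
        using zero_le_power2[of "w - 1"] by (simp add: power2_eq_square algebra_simps)
    qed simp
    finally have "(w\<^sup>2 - 1)\<^sup>2 / (2 * (w\<^sup>2 + 1)) \<le> (w - 1)\<^sup>2"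
      by (simp add: pos_divide_le_eq add_nonneg_pos)
    then show ?thesis
      unfolding w(2)[symmetric] by (simp add: power2_eq_square algebra_simps)
  qed
  finally show ?thesis .
qed

lemma ln_ratio_le_quadratic:
  fixes x z :: real
  assumes "-1 < x" "x < 1" "-1 < z" "z < 1"
  shows "ln ((1 - x) / (1 - z)) \<le> ((1 - x) / (1 - z) - 1) - (x - z)\<^sup>2 / 16"
proof -
  define u where "u = (1 - x) / (1 - z)"
  have "(x - z)\<^sup>2 / 16 \<le> (x - z)\<^sup>2 / (2 * (1 - z) * (2 - x - z))"
  proof (rule divide_left_mono)
    show "2 * (1 - z) * (2 - x - z) \<le> 16"
      using mult_mono[of "2 * (1 - z)" 4 "2 - x - z" 4] assms by simp
  qed (use assms in auto)
  also have "\<dots> = ((z - x) / (1 - z))\<^sup>2 / (2 * ((2 - x - z) / (1 - z)))"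
    using assms by (simp add: power2_eq_square divide_simps) (simp add: algebra_simps)
  also have "\<dots> = (u - 1)\<^sup>2 / (2 * (u + 1))"
  proof -
    have "u - 1 = (z - x) / (1 - z)" "u + 1 = (2 - x - z) / (1 - z)"
      using assms by (simp_all add: u_def divide_simps)
    then show ?thesis
      by (simp only:)
  qed
  moreover have "0 < u"
    using assms by (simp add: u_def)
  ultimately show ?thesis
    using ln_le_minus_one_quadratic[of u] unfolding u_def[symmetric] by linarith
qed

text \<open>No distinctness is needed: a pair with \<open>z i = z j\<close> contributes \<open>0\<close> to both sides, as \<open>x / 0 = 0\<close>.\<close>

lemma sum_pairs_difference_quotients:
  fixes d z :: "nat \<Rightarrow> 'a :: field"
  shows "(\<Sum>j<N. \<Sum>i<j. (d j - d i) / (z j - z i)) = (\<Sum>k<N. d k * (\<Sum>j\<in>{..<N} - {k}. 1 / (z k - z j)))"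
proof (induction N)
  case (Suc N)
  have "(\<Sum>k<Suc N. d k * (\<Sum>j\<in>{..<Suc N} - {k}. 1 / (z k - z j))) =
      (\<Sum>k<N. d k * (\<Sum>j\<in>{..<N} - {k}. 1 / (z k - z j)) + d k / (z k - z N)) + d N * (\<Sum>j<N. 1 / (z N - z j))"
  proof -
    have "{..<Suc N} - {k} = insert N ({..<N} - {k})" if "k < N" for k
      using that by auto
    then show ?thesis
      by (simp add: lessThan_Suc algebra_simps)
  qed
  also have "\<dots> = (\<Sum>k<N. d k * (\<Sum>j\<in>{..<N} - {k}. 1 / (z k - z j))) + (\<Sum>i<N. (d N - d i) / (z N - z i))"
  proof -
    have "d i / (z i - z N) + d N / (z N - z i) = (d N - d i) / (z N - z i)" for i
      by (metis (no_types) add.commute diff_divide_distrib divide_minus_right minus_diff_eq uminus_add_conv_diff)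
    then show ?thesis
      by (simp add: sum.distrib sum_distrib_left add.assoc flip: sum.distrib)
  qed
  finally show ?case
    using Suc by simp
qed simp

lemma stieltjes_relations_first_order_terms:
  fixes x z :: "nat \<Rightarrow> real"
  assumes z: "z \<in> open_alcove N" and crit: "stieltjes_relations N p q z"
  shows "(\<Sum>j<N. \<Sum>i<j. (x j - x i) / (z j - z i) - 1)
    + (\<Sum>i<N. p * ((1 - x i) / (1 - z i) - 1) + q * ((1 + x i) / (1 + z i) - 1)) = 0"
proof -
  have "(\<Sum>j<N. \<Sum>i<j. (x j - x i) / (z j - z i) - 1) =
      (\<Sum>j<N. \<Sum>i<j. ((x j - z j) - (x i - z i)) / (z j - z i))"
  proof (intro sum.cong refl)
    fix j i assume "j \<in> {..<N}" "i \<in> {..<j}"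
    then have "z i < z j"
      using z by (simp add: open_alcove_def)
    then show "(x j - x i) / (z j - z i) - 1 = ((x j - z j) - (x i - z i)) / (z j - z i)"
      by (simp add: divide_simps)
  qed
  also have "\<dots> = (\<Sum>k<N. (x k - z k) * (\<Sum>j\<in>{..<N} - {k}. 1 / (z k - z j)))"
    by (rule sum_pairs_difference_quotients)
  also have "\<dots> = - (\<Sum>i<N. p * ((1 - x i) / (1 - z i) - 1) + q * ((1 + x i) / (1 + z i) - 1))"
    unfolding sum_negf[symmetric]
  proof (intro sum.cong refl)
    fix k assume "k \<in> {..<N}"
    then have "1 - z k \<noteq> 0" "1 + z k \<noteq> 0"
      and S: "(\<Sum>j\<in>{..<N} - {k}. 1 / (z k - z j)) = p / (1 - z k) - q / (1 + z k)"
      using z crit by (auto simp: open_alcove_def stieltjes_relations_def)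
    then show "(x k - z k) * (\<Sum>j\<in>{..<N} - {k}. 1 / (z k - z j)) =
        - (p * ((1 - x k) / (1 - z k) - 1) + q * ((1 + x k) / (1 + z k) - 1))"
      unfolding S by (simp add: divide_simps) (simp add: algebra_simps)
  qed
  finally show ?thesis
    by simp
qed

lemma jacobi_log_weight_diff:
  assumes z: "z \<in> open_alcove N" and x: "x \<in> open_alcove N"
  shows "jacobi_log_weight N p q x - jacobi_log_weight N p q z =
    (\<Sum>j<N. \<Sum>i<j. ln ((x j - x i) / (z j - z i)))
    + (\<Sum>i<N. p * ln ((1 - x i) / (1 - z i)) + q * ln ((1 + x i) / (1 + z i)))"
proof -
  have "(\<Sum>j<N. \<Sum>i<j. ln (x j - x i)) - (\<Sum>j<N. \<Sum>i<j. ln (z j - z i)) =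
      (\<Sum>j<N. \<Sum>i<j. ln ((x j - x i) / (z j - z i)))"
    unfolding sum_subtractf[symmetric]
  proof (intro sum.cong refl)
    fix j i assume "j \<in> {..<N}" "i \<in> {..<j}"
    then have "z i < z j" "x i < x j"
      using z x by (simp_all add: open_alcove_def)
    then show "ln (x j - x i) - ln (z j - z i) = ln ((x j - x i) / (z j - z i))"
      by (simp add: ln_div)
  qed
  moreover have "(\<Sum>i<N. p * ln (1 - x i) + q * ln (1 + x i)) - (\<Sum>i<N. p * ln (1 - z i) + q * ln (1 + z i)) =
      (\<Sum>i<N. p * ln ((1 - x i) / (1 - z i)) + q * ln ((1 + x i) / (1 + z i)))"
    unfolding sum_subtractf[symmetric]
  proof (intro sum.cong refl)
    fix i assume "i \<in> {..<N}"
    then have "-1 < z i" "z i < 1" "-1 < x i" "x i < 1"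
      using z x by (simp_all add: open_alcove_def)
    then show "p * ln (1 - x i) + q * ln (1 + x i) - (p * ln (1 - z i) + q * ln (1 + z i)) =
        p * ln ((1 - x i) / (1 - z i)) + q * ln ((1 + x i) / (1 + z i))"
      by (simp add: ln_div algebra_simps)
  qed
  ultimately show ?thesis
    unfolding jacobi_log_weight_def by simp
qed

theorem jacobi_log_weight_le_quadratic:
  assumes p: "p > 0" and q: "q \<ge> 0"
    and z: "z \<in> open_alcove N" and crit: "stieltjes_relations N p q z"
    and x: "x \<in> open_alcove N"
  shows "jacobi_log_weight N p q x \<le> jacobi_log_weight N p q z - p / 16 * (\<Sum>i<N. (x i - z i)\<^sup>2)"
proof -
  have "jacobi_log_weight N p q x - jacobi_log_weight N p q z \<le>
      (\<Sum>j<N. \<Sum>i<j. (x j - x i) / (z j - z i) - 1)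
      + (\<Sum>i<N. p * (((1 - x i) / (1 - z i) - 1) - (x i - z i)\<^sup>2 / 16) + q * ((1 + x i) / (1 + z i) - 1))"
    unfolding jacobi_log_weight_diff[OF z x]
  proof (rule add_mono; intro sum_mono)
    fix j i assume "j \<in> {..<N}" "i \<in> {..<j}"
    then have "z i < z j" "x i < x j"
      using z x by (simp_all add: open_alcove_def)
    then show "ln ((x j - x i) / (z j - z i)) \<le> (x j - x i) / (z j - z i) - 1"
      by (intro ln_le_minus_one) simp
  next
    fix i assume "i \<in> {..<N}"
    then have "-1 < z i" "z i < 1" "-1 < x i" "x i < 1"
      using z x by (simp_all add: open_alcove_def)
    then have "p * ln ((1 - x i) / (1 - z i)) \<le> p * (((1 - x i) / (1 - z i) - 1) - (x i - z i)\<^sup>2 / 16)"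
      and "q * ln ((1 + x i) / (1 + z i)) \<le> q * ((1 + x i) / (1 + z i) - 1)"
      using p q by (auto intro!: mult_left_mono ln_ratio_le_quadratic ln_le_minus_one)
    then show "p * ln ((1 - x i) / (1 - z i)) + q * ln ((1 + x i) / (1 + z i))
        \<le> p * (((1 - x i) / (1 - z i) - 1) - (x i - z i)\<^sup>2 / 16) + q * ((1 + x i) / (1 + z i) - 1)"
      by (rule add_mono)
  qed
  also have "\<dots> = (\<Sum>j<N. \<Sum>i<j. (x j - x i) / (z j - z i) - 1)
      + (\<Sum>i<N. p * ((1 - x i) / (1 - z i) - 1) + q * ((1 + x i) / (1 + z i) - 1))
      - p / 16 * (\<Sum>i<N. (x i - z i)\<^sup>2)"
    unfolding sum_distrib_left add_diff_eq[symmetric] sum_subtractf[symmetric]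
    by (simp add: algebra_simps)
  also have "\<dots> = - p / 16 * (\<Sum>i<N. (x i - z i)\<^sup>2)"
    using stieltjes_relations_first_order_terms[OF z crit, of x] by simp
  finally show ?thesis
    by simp
qed

corollary jacobi_log_weight_le_of_dist_ge:
  assumes p: "p > 0" and q: "q \<ge> 0"
    and z: "z \<in> open_alcove N" and crit: "stieltjes_relations N p q z"
    and x: "x \<in> open_alcove N" and dist: "0 \<le> \<epsilon>" "\<epsilon> \<le> sqrt (\<Sum>i<N. (x i - z i)\<^sup>2)"
  shows "jacobi_log_weight N p q x \<le> jacobi_log_weight N p q z - p / 16 * \<epsilon>\<^sup>2"
proof -
  have "\<epsilon>\<^sup>2 \<le> (sqrt (\<Sum>i<N. (x i - z i)\<^sup>2))\<^sup>2"
    using dist(2,1) by (rule power_mono)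
  then have "p / 16 * \<epsilon>\<^sup>2 \<le> p / 16 * (\<Sum>i<N. (x i - z i)\<^sup>2)"
    using p by (intro mult_left_mono) (auto simp: sum_nonneg)
  then show ?thesis
    using jacobi_log_weight_le_quadratic[OF p q z crit x] by linarith
qed

section \<open>The density of the Jacobi ensemble\<close>

lemma open_alcove_subset_alcove: "open_alcove N \<subseteq> alcove N"
  unfolding open_alcove_def alcove_def by (auto simp: le_less)

lemma jacobi_dens_nonneg: "jacobi_dens N a b \<kappa> x \<ge> 0"
  unfolding jacobi_dens_def by (intro mult_nonneg_nonneg prod_nonneg) auto

lemma jacobi_dens_eq_exp:
  assumes x: "x \<in> open_alcove N"
  shows "jacobi_dens N a b \<kappa> x =
    exp (\<kappa> * jacobi_log_weight N ((a + b) / 2) (b / 2) x - (\<Sum>i<N. ln (1 - x i) + ln (1 + x i)) / 2)"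
proof -
  have "(\<Prod>j<N. \<Prod>i<j. (x j - x i) powr \<kappa>) = exp (\<kappa> * (\<Sum>j<N. \<Sum>i<j. ln (x j - x i)))"
    unfolding sum_distrib_left exp_sum[OF finite_lessThan]
  proof (intro prod.cong refl)
    fix j i assume "j \<in> {..<N}" "i \<in> {..<j}"
    then have "x i < x j"
      using x by (simp add: open_alcove_def)
    then show "(x j - x i) powr \<kappa> = exp (\<kappa> * ln (x j - x i))"
      by (simp add: powr_def)
  qed
  moreover have "(\<Prod>i<N. (1 - x i) powr (\<kappa> * (a + b) / 2 - 1/2) * (1 + x i) powr (\<kappa> * b / 2 - 1/2)) =
      exp (\<Sum>i<N. (\<kappa> * (a + b) / 2 - 1/2) * ln (1 - x i) + (\<kappa> * b / 2 - 1/2) * ln (1 + x i))"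
    unfolding exp_sum[OF finite_lessThan]
  proof (intro prod.cong refl)
    fix i assume "i \<in> {..<N}"
    then have "1 - x i > 0" "1 + x i > 0"
      using x by (auto simp: open_alcove_def)
    then show "(1 - x i) powr (\<kappa> * (a + b) / 2 - 1/2) * (1 + x i) powr (\<kappa> * b / 2 - 1/2) =
        exp ((\<kappa> * (a + b) / 2 - 1/2) * ln (1 - x i) + (\<kappa> * b / 2 - 1/2) * ln (1 + x i))"
      by (simp add: powr_def exp_add)
  qed
  moreover have "(\<Sum>i<N. (\<kappa> * (a + b) / 2 - 1/2) * ln (1 - x i) + (\<kappa> * b / 2 - 1/2) * ln (1 + x i)) =
      \<kappa> * (\<Sum>i<N. (a + b) / 2 * ln (1 - x i) + b / 2 * ln (1 + x i)) - (\<Sum>i<N. ln (1 - x i) + ln (1 + x i)) / 2"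
    unfolding sum_distrib_left sum_divide_distrib sum_subtractf[symmetric]
    by (rule sum.cong[OF refl]) (simp add: algebra_simps)
  moreover have "indicator (alcove N) x = (1 :: real)"
    using subsetD[OF open_alcove_subset_alcove x] by simp
  ultimately show ?thesis
    unfolding jacobi_dens_def jacobi_log_weight_def by (simp add: exp_add[symmetric] algebra_simps)
qed

lemma jacobi_dens_pos: "x \<in> open_alcove N \<Longrightarrow> jacobi_dens N a b \<kappa> x > 0"
  by (simp add: jacobi_dens_eq_exp)

lemma jacobi_dens_eq_exp_times_jacobi_dens_1:
  assumes "x \<in> open_alcove N"
  shows "jacobi_dens N a b \<kappa> x = exp ((\<kappa> - 1) * jacobi_log_weight N ((a + b) / 2) (b / 2) x) * jacobi_dens N a b 1 x"
  unfolding jacobi_dens_eq_exp[OF assms] exp_add[symmetric] by (simp add: algebra_simps)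

lemma jacobi_dens_eq_0:
  assumes "\<kappa> > 0" and "x \<notin> open_alcove N"
  shows "jacobi_dens N a b \<kappa> x = 0"
proof (cases "x \<in> alcove N")
  case True
  then have bounds: "\<forall>i<N. -1 \<le> x i \<and> x i \<le> 1" and mono: "\<forall>i j. i \<le> j \<and> j < N \<longrightarrow> x i \<le> x j"
    unfolding alcove_def by auto
  from assms(2) consider (boundary) i where "i < N" "\<not> (-1 < x i \<and> x i < 1)"
    | (collision) i j where "j < N" "i < j" "\<not> x i < x j"
    unfolding open_alcove_def by blast
  then show ?thesis
  proof cases
    case boundary
    then have "x i = -1 \<or> x i = 1"
      using bounds by force
    then have "(\<Prod>i<N. (1 - x i) powr (\<kappa> * (a + b) / 2 - 1/2) * (1 + x i) powr (\<kappa> * b / 2 - 1/2)) = 0"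
      using boundary(1) by (intro prod_zero) (auto intro!: bexI[of _ i])
    then show ?thesis
      unfolding jacobi_dens_def by simp
  next
    case collision
    then have "x i = x j"
      using mono by (meson order_antisym_conv less_imp_le not_less)
    then have inner: "(\<Prod>i<j. (x j - x i) powr \<kappa>) = 0"
      using collision(2) by (intro prod_zero) (auto intro!: bexI[of _ i])
    have "(\<Prod>j<N. \<Prod>i<j. (x j - x i) powr \<kappa>) = 0"
      using collision(1) by (intro prod_zero[OF finite_lessThan] bexI[where P = "\<lambda>j. (\<Prod>i<j. (x j - x i) powr \<kappa>) = 0", OF inner]) simp
    then show ?thesis
      unfolding jacobi_dens_def by simp
  qed
qed (simp add: jacobi_dens_def)

lemma sets_alcove: "alcove N \<inter> space (lborelN N) \<in> sets (lborelN N)"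
proof -
  have "alcove N \<inter> space (lborelN N) = {x \<in> space (lborelN N).
      (\<forall>i\<in>{..<N}. -1 \<le> x i \<and> x i \<le> 1) \<and> (\<forall>j\<in>{..<N}. \<forall>i\<in>{..<N}. i \<le> j \<longrightarrow> x i \<le> x j)}"
    unfolding alcove_def by (auto dest: le_less_trans)
  also have "\<dots> \<in> sets (lborelN N)"
  proof (rule predE, intro pred_intros_logic(3) pred_intros_finite finite_lessThan pred_intros_imp')
    fix i j assume "i \<in> {..<N}" "j \<in> {..<N}"
    then have "(\<lambda>x. x i) \<in> borel_measurable (lborelN N)" "(\<lambda>x. x j) \<in> borel_measurable (lborelN N)"
      by measurable
    then show "Measurable.pred (lborelN N) (\<lambda>x. -1 \<le> x i)" "Measurable.pred (lborelN N) (\<lambda>x. x i \<le> 1)"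
      and "Measurable.pred (lborelN N) (\<lambda>x. x j \<le> x i)"
      unfolding pred_def by (simp_all add: borel_measurable_le)
  qed
  finally show ?thesis .
qed

lemma borel_measurable_jacobi_dens[measurable]: "jacobi_dens N a b \<kappa> \<in> borel_measurable (lborelN N)"
  unfolding jacobi_dens_def
  apply (intro borel_measurable_times borel_measurable_prod)
  using sets_alcove borel_measurable_indicator_iff apply blast
  apply measurable
  done

lemma emeasure_jacobi_ensemble:
  assumes "A \<in> sets (lborelN N)"
  shows "emeasure (jacobi_ensemble N a b \<kappa>) A =
    (\<integral>\<^sup>+ x\<in>A. ennreal (jacobi_dens N a b \<kappa> x / jacobi_norm N a b \<kappa>) \<partial>lborelN N)"
  unfolding jacobi_ensemble_def by (rule emeasure_density[OF _ assms]) measurable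

text \<open>\<open>jacobi_norm\<close> is \<open>enn2real\<close> of the integral of the density, hence \<open>0\<close> if that integral is
  infinite; the hypothesis that \<open>\<mu>\<^sub>\<kappa>\<close> is a probability measure excludes this.\<close>

lemma
  assumes "prob_space (jacobi_ensemble N a b \<kappa>)"
  shows jacobi_norm_pos: "jacobi_norm N a b \<kappa> > 0"
    and nn_integral_jacobi_dens: "(\<integral>\<^sup>+ x. ennreal (jacobi_dens N a b \<kappa> x) \<partial>lborelN N) = ennreal (jacobi_norm N a b \<kappa>)"
proof -
  have "1 = emeasure (jacobi_ensemble N a b \<kappa>) (space (lborelN N))"
    using prob_space.emeasure_space_1[OF assms] by (simp add: jacobi_ensemble_def)
  also have "\<dots> = (\<integral>\<^sup>+ x. ennreal (jacobi_dens N a b \<kappa> x / jacobi_norm N a b \<kappa>) \<partial>lborelN N)"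
    by (simp add: emeasure_jacobi_ensemble)
  finally have one: "(\<integral>\<^sup>+ x. ennreal (jacobi_dens N a b \<kappa> x / jacobi_norm N a b \<kappa>) \<partial>lborelN N) = 1" ..
  then have "jacobi_norm N a b \<kappa> \<noteq> 0"
    by auto
  then show pos: "jacobi_norm N a b \<kappa> > 0"
    by (simp add: jacobi_norm_def less_le)
  then have "(\<integral>\<^sup>+ x. ennreal (jacobi_dens N a b \<kappa> x) \<partial>lborelN N) \<noteq> \<top>"
    by (auto simp: jacobi_norm_def)
  then show "(\<integral>\<^sup>+ x. ennreal (jacobi_dens N a b \<kappa> x) \<partial>lborelN N) = ennreal (jacobi_norm N a b \<kappa>)"
    by (simp add: jacobi_norm_def less_top)
qed

lemma measure_jacobi_ensemble_le:
  assumes ens: "prob_space (jacobi_ensemble N a b \<kappa>)" and ens1: "prob_space (jacobi_ensemble N a b 1)"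
    and \<kappa>: "\<kappa> \<ge> 1" and S: "S \<in> sets (lborelN N)"
    and bound: "\<And>x. x \<in> S \<Longrightarrow> x \<in> open_alcove N \<Longrightarrow> jacobi_log_weight N ((a + b) / 2) (b / 2) x \<le> c"
  shows "measure (jacobi_ensemble N a b \<kappa>) S \<le> exp ((\<kappa> - 1) * c) * jacobi_norm N a b 1 / jacobi_norm N a b \<kappa>"
proof -
  define E where "E = exp ((\<kappa> - 1) * c) / jacobi_norm N a b \<kappa>"
  have E: "E \<ge> 0"
    using jacobi_norm_pos[OF ens] by (simp add: E_def)
  have "jacobi_dens N a b \<kappa> x \<le> exp ((\<kappa> - 1) * c) * jacobi_dens N a b 1 x" if "x \<in> S" for x
  proof (cases "x \<in> open_alcove N")
    case True
    have "(\<kappa> - 1) * jacobi_log_weight N ((a + b) / 2) (b / 2) x \<le> (\<kappa> - 1) * c"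
      using bound[OF that True] \<kappa> by (intro mult_left_mono) auto
    then have "exp ((\<kappa> - 1) * jacobi_log_weight N ((a + b) / 2) (b / 2) x) \<le> exp ((\<kappa> - 1) * c)"
      by simp
    then show ?thesis
      unfolding jacobi_dens_eq_exp_times_jacobi_dens_1[OF True, where \<kappa> = \<kappa>]
      by (rule mult_right_mono) (rule jacobi_dens_nonneg)
  next
    case False
    then show ?thesis
      using \<kappa> by (simp add: jacobi_dens_eq_0 jacobi_dens_nonneg)
  qed
  then have "ennreal (jacobi_dens N a b \<kappa> x / jacobi_norm N a b \<kappa>) * indicator S x
      \<le> ennreal E * ennreal (jacobi_dens N a b 1 x)" for x
    using jacobi_norm_pos[OF ens] E
    by (auto simp: indicator_def E_def ennreal_mult'[symmetric] intro!: ennreal_leI divide_right_mono)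
  then have "emeasure (jacobi_ensemble N a b \<kappa>) S \<le> (\<integral>\<^sup>+ x. ennreal E * ennreal (jacobi_dens N a b 1 x) \<partial>lborelN N)"
    unfolding emeasure_jacobi_ensemble[OF S] by (rule nn_integral_mono)
  also have "\<dots> = ennreal (E * jacobi_norm N a b 1)"
    using E jacobi_norm_pos[OF ens1] by (simp add: nn_integral_cmult nn_integral_jacobi_dens[OF ens1] ennreal_mult)
  finally show ?thesis
    using finite_measure.emeasure_eq_measure[OF prob_space.finite_measure[OF ens]] jacobi_norm_pos[OF ens] jacobi_norm_pos[OF ens1] by (simp add: E_def)
qed

lemma jacobi_norm_ge:
  assumes ens: "prob_space (jacobi_ensemble N a b \<kappa>)" and \<kappa>: "\<kappa> \<ge> 1"
    and B: "B \<in> sets (lborelN N)" "B \<subseteq> open_alcove N" and bound: "\<And>x. x \<in> B \<Longrightarrow> c \<le> jacobi_log_weight N ((a + b) / 2) (b / 2) x"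
  shows "ennreal (exp ((\<kappa> - 1) * c)) * (\<integral>\<^sup>+ x\<in>B. ennreal (jacobi_dens N a b 1 x) \<partial>lborelN N)
    \<le> ennreal (jacobi_norm N a b \<kappa>)"
proof -
  have "exp ((\<kappa> - 1) * c) * jacobi_dens N a b 1 x \<le> jacobi_dens N a b \<kappa> x" if "x \<in> B" for x
  proof -
    have "(\<kappa> - 1) * c \<le> (\<kappa> - 1) * jacobi_log_weight N ((a + b) / 2) (b / 2) x"
      using bound[OF that] \<kappa> by (intro mult_left_mono) auto
    then have "exp ((\<kappa> - 1) * c) \<le> exp ((\<kappa> - 1) * jacobi_log_weight N ((a + b) / 2) (b / 2) x)"
      by simp
    then show ?thesis
      unfolding jacobi_dens_eq_exp_times_jacobi_dens_1[OF subsetD[OF B(2) that], where \<kappa> = \<kappa>]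
      by (rule mult_right_mono) (rule jacobi_dens_nonneg)
  qed
  then have "ennreal (exp ((\<kappa> - 1) * c)) * (ennreal (jacobi_dens N a b 1 x) * indicator B x)
      \<le> ennreal (jacobi_dens N a b \<kappa> x)" for x
    by (auto simp: indicator_def ennreal_mult'[symmetric] intro!: ennreal_leI)
  then have "ennreal (exp ((\<kappa> - 1) * c)) * (\<integral>\<^sup>+ x\<in>B. ennreal (jacobi_dens N a b 1 x) \<partial>lborelN N)
      \<le> (\<integral>\<^sup>+ x. ennreal (jacobi_dens N a b \<kappa> x) \<partial>lborelN N)"
    using B(1) by (subst nn_integral_cmult[symmetric]) (measurable, auto intro!: nn_integral_mono)
  then show ?thesis
    by (simp add: nn_integral_jacobi_dens[OF ens])
qed

section \<open>Concentration at the zeros\<close>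

lemma jacobi_log_weight_ge_on_cube:
  assumes gaps: "\<And>i j. j < N \<Longrightarrow> i < j \<Longrightarrow> 2 * e < z j - z i"
    and ends: "\<And>i. i < N \<Longrightarrow> e < 1 - z i \<and> e < 1 + z i"
    and x: "\<forall>i<N. \<bar>x i - z i\<bar> \<le> e" and p: "p \<ge> 0" and q: "q \<ge> 0"
  shows "x \<in> open_alcove N"
    and "(\<Sum>j<N. \<Sum>i<j. ln (z j - z i - 2 * e)) + (\<Sum>i<N. p * ln (1 - z i - e) + q * ln (1 + z i - e))
      \<le> jacobi_log_weight N p q x"
proof -
  have diff: "z j - z i - 2 * e \<le> x j - x i" if "j < N" "i < j" for i j
    using x that by (smt (verit) less_trans)
  have bounds: "1 - z i - e \<le> 1 - x i" "1 + z i - e \<le> 1 + x i" if "i < N" for i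
    using x that by force+
  have "-1 < x i \<and> x i < 1" if "i < N" for i
    using bounds[OF that] ends[OF that] by linarith
  moreover have "x i < x j" if "j < N" "i < j" for i j
    using diff[OF that] gaps[OF that] by linarith
  ultimately show "x \<in> open_alcove N"
    by (simp add: open_alcove_def)
  show "(\<Sum>j<N. \<Sum>i<j. ln (z j - z i - 2 * e)) + (\<Sum>i<N. p * ln (1 - z i - e) + q * ln (1 + z i - e))
      \<le> jacobi_log_weight N p q x"
    unfolding jacobi_log_weight_def
  proof (rule add_mono; intro sum_mono)
    fix j i assume "j \<in> {..<N}" "i \<in> {..<j}"
    then have "0 < z j - z i - 2 * e" "z j - z i - 2 * e \<le> x j - x i"
      using gaps diff by auto
    then show "ln (z j - z i - 2 * e) \<le> ln (x j - x i)"
      by simp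
  next
    fix i assume "i \<in> {..<N}"
    then show "p * ln (1 - z i - e) + q * ln (1 + z i - e) \<le> p * ln (1 - x i) + q * ln (1 + x i)"
      using ends[of i] bounds[of i] p q by (intro add_mono mult_left_mono) auto
  qed
qed

lemma jacobi_log_weight_ge_near:
  assumes z: "z \<in> open_alcove N" and p: "p \<ge> 0" and q: "q \<ge> 0" and D: "D > 0"
  obtains \<eta> where "\<eta> > 0"
    and "\<And>x. \<forall>i<N. \<bar>x i - z i\<bar> \<le> \<eta> \<Longrightarrow>
      x \<in> open_alcove N \<and> jacobi_log_weight N p q z - D \<le> jacobi_log_weight N p q x"
proof -
  define L where "L e = (\<Sum>j<N. \<Sum>i<j. ln (z j - z i - 2 * e)) + (\<Sum>i<N. p * ln (1 - z i - e) + q * ln (1 + z i - e))"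
    for e :: real
  have gaps: "0 < z j - z i" if "j \<in> {..<N}" "i \<in> {..<j}" for i j
    using z that by (simp add: open_alcove_def)
  have ends: "0 < 1 - z i" "0 < 1 + z i" if "i \<in> {..<N}" for i
  proof -
    have "-1 < z i" "z i < 1"
      using z that by (simp_all add: open_alcove_def)
    then show "0 < 1 - z i" "0 < 1 + z i"
      by simp_all
  qed
  have "(L \<longlongrightarrow> L 0) (at_right 0)"
    unfolding L_def
  proof (intro tendsto_intros)
    fix j i assume "j \<in> {..<N}" "i \<in> {..<j}"
    then show "z j - z i - 2 * 0 \<noteq> 0"
      using gaps by fastforce
  next
    fix i assume "i \<in> {..<N}"
    then show "1 - z i - 0 \<noteq> 0" "1 + z i - 0 \<noteq> 0"
      using ends by fastforce+
  qed
  moreover have "L 0 = jacobi_log_weight N p q z"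
    by (simp add: L_def jacobi_log_weight_def)
  ultimately have ev_weight: "\<forall>\<^sub>F e in at_right 0. jacobi_log_weight N p q z - D < L e"
    using D by (intro order_tendstoD(1)) auto
  have "((\<lambda>e. 2 * e) \<longlongrightarrow> 0) (at_right (0 :: real))" "((\<lambda>e. e) \<longlongrightarrow> 0) (at_right (0 :: real))"
    by (auto intro!: tendsto_eq_intros)
  then have ev_gaps: "\<forall>\<^sub>F e in at_right 0. \<forall>j\<in>{..<N}. \<forall>i\<in>{..<j}. 2 * e < z j - z i"
    and ev_ends: "\<forall>\<^sub>F e in at_right 0. \<forall>i\<in>{..<N}. e < 1 - z i \<and> e < 1 + z i"
    using gaps ends by (auto intro!: eventually_ball_finite eventually_conj order_tendstoD(2))
  then have "\<forall>\<^sub>F e in at_right 0. 0 < e \<and> jacobi_log_weight N p q z - D < L e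
      \<and> (\<forall>j\<in>{..<N}. \<forall>i\<in>{..<j}. 2 * e < z j - z i) \<and> (\<forall>i\<in>{..<N}. e < 1 - z i \<and> e < 1 + z i)"
    using ev_weight ev_gaps ev_ends eventually_at_right_less by (intro eventually_conj)
  then obtain e where "0 < e" and weight: "jacobi_log_weight N p q z - D < L e"
    and "\<forall>j\<in>{..<N}. \<forall>i\<in>{..<j}. 2 * e < z j - z i" and "\<forall>i\<in>{..<N}. e < 1 - z i \<and> e < 1 + z i"
    using eventually_happens'[OF trivial_limit_at_right_real] by blast
  then have "x \<in> open_alcove N \<and> L e \<le> jacobi_log_weight N p q x" if "\<forall>i<N. \<bar>x i - z i\<bar> \<le> e" for x
    using jacobi_log_weight_ge_on_cube[of N e z x p q] that p q unfolding L_def by auto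
  then show ?thesis
    using that[OF \<open>0 < e\<close>] weight by force
qed

lemma emeasure_lborelN_cube_pos:
  assumes "e > 0"
  shows "emeasure (lborelN N) (PiE {..<N} (\<lambda>i. {z i - e .. z i + e})) > 0"
proof -
  interpret product_sigma_finite "\<lambda>_::nat. lborel"
    by standard
  have "emeasure (lborelN N) (PiE {..<N} (\<lambda>i. {z i - e .. z i + e})) = (\<Prod>i<N. emeasure lborel {z i - e .. z i + e})"
    by (rule emeasure_PiM) auto
  also have "\<dots> = ennreal ((2 * e) ^ N)"
    using assms by (simp add: ennreal_power)
  finally show ?thesis
    using assms by simp
qed

lemma set_nn_integral_jacobi_dens_pos:
  assumes B: "B \<in> sets (lborelN N)" "B \<subseteq> open_alcove N" and pos: "emeasure (lborelN N) B > 0"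
  shows "(\<integral>\<^sup>+ x\<in>B. ennreal (jacobi_dens N a b \<kappa> x) \<partial>lborelN N) > 0"
proof -
  have "sets (lborelN N) = sets (PiM {..<N} (\<lambda>_. borel))"
    by (intro sets_PiM_cong) simp_all
  with B(1) have [measurable]: "B \<in> sets (PiM {..<N} (\<lambda>_. borel))"
    by simp
  have "(\<integral>\<^sup>+ x\<in>B. ennreal (jacobi_dens N a b \<kappa> x) \<partial>lborelN N) \<noteq> 0"
  proof
    assume "(\<integral>\<^sup>+ x\<in>B. ennreal (jacobi_dens N a b \<kappa> x) \<partial>lborelN N) = 0"
    then have "AE x in lborelN N. ennreal (jacobi_dens N a b \<kappa> x) * indicator B x = 0"
      using B(1) by (subst nn_integral_0_iff_AE[symmetric]) measurable
    moreover have "x \<notin> B" if "ennreal (jacobi_dens N a b \<kappa> x) * indicator B x = 0" for x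
    proof
      assume "x \<in> B"
      then have "jacobi_dens N a b \<kappa> x > 0"
        using B(2) jacobi_dens_pos by blast
      then show False
        using that \<open>x \<in> B\<close> by simp
    qed
    ultimately have "AE x in lborelN N. x \<notin> B"
      by (rule eventually_mono)
    moreover have "{x \<in> space (lborelN N). \<not> x \<notin> B} = B"
      using sets.sets_into_space[OF B(1)] by auto
    ultimately have "emeasure (lborelN N) B = 0"
      using AE_iff_measurable[OF B(1)] by simp
    then show False
      using pos by simp
  qed
  then show ?thesis
    by (simp add: zero_less_iff_neq_zero)
qed

lemma jacobi_norm_ge_exp:
  assumes a: "a \<ge> 0" and b: "b > 0" and z: "z \<in> open_alcove N" and D: "D > 0"
    and ens: "\<And>\<kappa>. \<kappa> > 0 \<Longrightarrow> prob_space (jacobi_ensemble N a b \<kappa>)"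
  obtains j where "j > 0"
    and "\<And>\<kappa>. \<kappa> \<ge> 1 \<Longrightarrow>
      exp ((\<kappa> - 1) * (jacobi_log_weight N ((a + b) / 2) (b / 2) z - D)) * j \<le> jacobi_norm N a b \<kappa>"
proof -
  define W where "W = jacobi_log_weight N ((a + b) / 2) (b / 2)"
  obtain \<eta> where "\<eta> > 0"
    and near: "\<And>x. \<forall>i<N. \<bar>x i - z i\<bar> \<le> \<eta> \<Longrightarrow> x \<in> open_alcove N \<and> W z - D \<le> W x"
    using jacobi_log_weight_ge_near[OF z, of "(a + b) / 2" "b / 2" D] a b D unfolding W_def by auto
  define B where "B = PiE {..<N} (\<lambda>i. {z i - \<eta> .. z i + \<eta>})"
  have B: "B \<in> sets (lborelN N)"
    unfolding B_def by (intro sets_PiM_I_finite) auto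
  have B_near: "\<forall>i<N. \<bar>x i - z i\<bar> \<le> \<eta>" if "x \<in> B" for x
  proof (intro allI impI)
    fix i assume "i < N"
    then have "x i \<in> {z i - \<eta> .. z i + \<eta>}"
      using that unfolding B_def PiE_iff by blast
    then show "\<bar>x i - z i\<bar> \<le> \<eta>"
      by (simp add: abs_le_iff)
  qed
  define J where "J = (\<integral>\<^sup>+ x\<in>B. ennreal (jacobi_dens N a b 1 x) \<partial>lborelN N)"
  have "J \<le> (\<integral>\<^sup>+ x. ennreal (jacobi_dens N a b 1 x) \<partial>lborelN N)"
    unfolding J_def by (intro nn_integral_mono) (simp add: indicator_def)
  also have "\<dots> = ennreal (jacobi_norm N a b 1)"
    using nn_integral_jacobi_dens[OF ens[of 1]] by simp
  finally have "J \<le> ennreal (jacobi_norm N a b 1)" .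
  moreover have "J > 0"
    unfolding J_def using B near B_near \<open>\<eta> > 0\<close>
    by (intro set_nn_integral_jacobi_dens_pos) (auto simp: B_def emeasure_lborelN_cube_pos)
  ultimately obtain j where J: "J = ennreal j" "j > 0"
    by (metis ennreal_cases ennreal_less_zero_iff neq_top_trans ennreal_neq_top)
  have "exp ((\<kappa> - 1) * (W z - D)) * j \<le> jacobi_norm N a b \<kappa>" if \<kappa>: "\<kappa> \<ge> 1" for \<kappa>
  proof -
    have "ennreal (exp ((\<kappa> - 1) * (W z - D))) * J \<le> ennreal (jacobi_norm N a b \<kappa>)"
      unfolding J_def using jacobi_norm_ge[OF ens \<kappa> B] near B_near \<kappa> unfolding W_def by auto
    then show ?thesis
      using J jacobi_norm_pos[OF ens, of \<kappa>] \<kappa> by (simp add: ennreal_mult[symmetric])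
  qed
  then show ?thesis
    using that J(2) unfolding W_def by blast
qed

theorem jacobi_ensemble_concentration:
  assumes a: "a \<ge> 0" and b: "b > 0"
    and z: "z \<in> open_alcove N" and crit: "stieltjes_relations N ((a + b) / 2) (b / 2) z"
    and ens: "\<And>\<kappa>. \<kappa> > 0 \<Longrightarrow> prob_space (jacobi_ensemble N a b \<kappa>)"
    and \<epsilon>: "\<epsilon> > 0"
  shows "((\<lambda>\<kappa>. measure (jacobi_ensemble N a b \<kappa>) {x \<in> space (lborelN N). \<epsilon> \<le> sqrt (\<Sum>i<N. (x i - z i)\<^sup>2)})
    \<longlongrightarrow> 0) at_top"
proof -
  define W where "W = jacobi_log_weight N ((a + b) / 2) (b / 2)"
  define D where "D = (a + b) / 2 / 16 * \<epsilon>\<^sup>2"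
  define S where "S = {x \<in> space (lborelN N). \<epsilon> \<le> sqrt (\<Sum>i<N. (x i - z i)\<^sup>2)}"
  have D: "D > 0"
    using a b \<epsilon> by (simp add: D_def)
  have S: "S \<in> sets (lborelN N)"
    unfolding S_def by measurable
  have p: "(a + b) / 2 > 0" and q: "b / 2 \<ge> 0"
    using a b by simp_all
  have far: "W x \<le> W z - D" if "x \<in> S" "x \<in> open_alcove N" for x
  proof -
    have "\<epsilon> \<le> sqrt (\<Sum>i<N. (x i - z i)\<^sup>2)"
      using that(1) by (simp add: S_def)
    then show ?thesis
      unfolding W_def D_def by (rule jacobi_log_weight_le_of_dist_ge[OF p q z crit that(2) less_imp_le[OF \<epsilon>]])
  qed
  obtain j where "j > 0" and lower: "\<And>\<kappa>. \<kappa> \<ge> 1 \<Longrightarrow> exp ((\<kappa> - 1) * (W z - D / 2)) * j \<le> jacobi_norm N a b \<kappa>"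
    using jacobi_norm_ge_exp[OF a b z half_gt_zero[OF D] ens] unfolding W_def by blast
  have bound: "measure (jacobi_ensemble N a b \<kappa>) S \<le> exp (- ((\<kappa> - 1) * (D / 2))) * (jacobi_norm N a b 1 / j)"
    if \<kappa>: "\<kappa> \<ge> 1" for \<kappa>
  proof -
    define n where "n = jacobi_norm N a b"
    have n: "n 1 > 0" "n \<kappa> > 0"
      using jacobi_norm_pos[OF ens] \<kappa> by (simp_all add: n_def)
    have "measure (jacobi_ensemble N a b \<kappa>) S \<le> exp ((\<kappa> - 1) * (W z - D)) * n 1 / n \<kappa>"
      using measure_jacobi_ensemble_le[OF ens ens \<kappa> S] far \<kappa> unfolding W_def n_def by auto
    also have "\<dots> \<le> exp ((\<kappa> - 1) * (W z - D)) * n 1 / (exp ((\<kappa> - 1) * (W z - D / 2)) * j)"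
      using lower[OF \<kappa>] n \<open>j > 0\<close> unfolding n_def by (intro divide_left_mono) auto
    also have "exp ((\<kappa> - 1) * (W z - D)) = exp (- ((\<kappa> - 1) * (D / 2))) * exp ((\<kappa> - 1) * (W z - D / 2))"
      by (simp add: exp_add[symmetric] algebra_simps)
    finally show ?thesis
      by (simp add: n_def)
  qed
  have "((\<lambda>\<kappa>. exp (- ((\<kappa> - 1) * (D / 2))) * (jacobi_norm N a b 1 / j)) \<longlongrightarrow> 0) at_top"
    using D by real_asymp
  then show ?thesis
    unfolding S_def[symmetric]
  proof (rule tendsto_sandwich[rotated 2, OF tendsto_const])
    show "\<forall>\<^sub>F \<kappa> in at_top. measure (jacobi_ensemble N a b \<kappa>) S \<le> exp (- ((\<kappa> - 1) * (D / 2))) * (jacobi_norm N a b 1 / j)"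
      using eventually_ge_at_top[of 1] by eventually_elim (rule bound)
  qed simp
qed

theorem theorem2p3:
  fixes N :: nat and a b :: real
    and M :: "'w measure" and X :: "real \<Rightarrow> 'w \<Rightarrow> (nat \<Rightarrow> real)"
    and z :: "nat \<Rightarrow> real"
  assumes "a \<ge> 0" and "b > 0"
    and "prob_space M"
    and "\<And>\<kappa>. \<kappa> > 0 \<Longrightarrow> X \<kappa> \<in> measurable M (lborelN N)"
    and "\<And>\<kappa>. \<kappa> > 0 \<Longrightarrow> distr M (lborelN N) (X \<kappa>) = jacobi_ensemble N a b \<kappa>"
    and "\<And>i j. i < j \<Longrightarrow> j < N \<Longrightarrow> z i < z j"
    and "{x. poly (jacobi_poly N (a + b - 1) (b - 1)) x = 0} = z ` {..<N}"
  shows "\<And>\<epsilon>. \<epsilon> > 0 \<Longrightarrow>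
    ((\<lambda>\<kappa>. measure M {\<omega> \<in> space M. sqrt (\<Sum>i<N. (X \<kappa> \<omega> i - z i)^2) \<ge> \<epsilon>})
       \<longlongrightarrow> 0) at_top"
proof -
  fix \<epsilon> :: real assume "\<epsilon> > 0"
  have zeros: "z \<in> open_alcove N" "stieltjes_relations N ((a + b) / 2) (b / 2) z"
    using jacobi_poly_zeros_stieltjes[of "a + b - 1" "b - 1" N z] assms(1,2,6,7) by simp_all
  define S where "S = {x \<in> space (lborelN N). \<epsilon> \<le> sqrt (\<Sum>i<N. (x i - z i)\<^sup>2)}"
  have ens: "prob_space (jacobi_ensemble N a b \<kappa>)" if "\<kappa> > 0" for \<kappa>
    using prob_space.prob_space_distr[OF assms(3) assms(4)[OF that]] assms(5)[OF that] by simp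
  have "\<forall>\<^sub>F \<kappa> in at_top. measure (jacobi_ensemble N a b \<kappa>) S =
      measure M {\<omega> \<in> space M. sqrt (\<Sum>i<N. (X \<kappa> \<omega> i - z i)^2) \<ge> \<epsilon>}"
    using eventually_gt_at_top[of 0]
  proof eventually_elim
    case (elim \<kappa>)
    have "X \<kappa> -` S \<inter> space M = {\<omega> \<in> space M. sqrt (\<Sum>i<N. (X \<kappa> \<omega> i - z i)^2) \<ge> \<epsilon>}"
      using measurable_space[OF assms(4)[OF elim]] by (auto simp: S_def)
    then show ?case
      using measure_distr[OF assms(4)[OF elim], of S] assms(5)[OF elim] by (simp add: S_def)
  qed
  moreover have "((\<lambda>\<kappa>. measure (jacobi_ensemble N a b \<kappa>) S) \<longlongrightarrow> 0) at_top"
    unfolding S_def by (rule jacobi_ensemble_concentration[OF assms(1,2) zeros ens \<open>\<epsilon> > 0\<close>])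
  ultimately show "((\<lambda>\<kappa>. measure M {\<omega> \<in> space M. sqrt (\<Sum>i<N. (X \<kappa> \<omega> i - z i)^2) \<ge> \<epsilon>}) \<longlongrightarrow> 0) at_top"
    by (rule tendsto_cong[THEN iffD1])
qed

end
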